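(* Let $\mathcal{F}$ be a complete pointed virtually inscribable fan in $\mathbb{R}^2$ with $n\ge3$ regions and profile $\beta=(\beta_0,\dots,\beta_{n-1})$ (indices modulo $n$). If $n$ is odd, then $\mathcal{F}$ is inscribable if and only if $\beta_{j}-\beta_{j+1}+\beta_{j+2}-\cdots-\beta_{j+n-2}+\beta_{j+n-1}>0$ for all $0\le j<n$. If $n=2m$ is even, then $\mathcal{F}$ is inscribable if and only if $\sum_{i=1}^{h}\beta_{2i+j}+\sum_{i=h+1}^{m-1}\beta_{2i+1+j}<\pi$ for all $0\le h<m$ and $0\le j<n$.
   Context: The regions $R_0,\dots,R_{n-1}$ of $\mathcal{F}$ are ordered counterclockwise and $\beta_i\in(0,\pi)$ is the angle of $R_i$; $\beta$ determines $\mathcal{F}$ up to rotation. A fan is inscribable if it is the normal fan of a polygon whose vertices lie on a circle. The fan is virtually inscribable if there is a nonzero $v\in\mathbb{R}^2$ fixed by the composition of the reflections in the $n$ rays of $\mathcal{F}$ taken in cyclic order (equivalently: for $n$ odd always; for $n$ even iff the alternate angles $\beta_0+\beta_2+\cdots+\beta_{n-2}$ sum to $\pi$). *)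

theory Defs
  imports "HOL-Analysis.Analysis"
begin

text \<open>The plane R^2 is modelled by the type complex (a euclidean_space with the
standard inner product).  A profile is beta :: nat => real, used at indices < n.\<close>

definition ray_angle :: "real \<Rightarrow> (nat \<Rightarrow> real) \<Rightarrow> nat \<Rightarrow> real" where
  "ray_angle \<alpha> \<beta> i = \<alpha> + (\<Sum>k<i. \<beta> k)"

definition fan_region :: "real \<Rightarrow> (nat \<Rightarrow> real) \<Rightarrow> nat \<Rightarrow> complex set" where
  "fan_region \<alpha> \<beta> i =
     {complex_of_real r * cis t | r t. 0 \<le> r \<and> ray_angle \<alpha> \<beta> i \<le> t \<and> t \<le> ray_angle \<alpha> \<beta> i + \<beta> i}"

text \<open>The fan (as its set of regions = maximal cones) with n regions.\<close>
definition fan_regions :: "nat \<Rightarrow> real \<Rightarrow> (nat \<Rightarrow> real) \<Rightarrow> complex set set" where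
  "fan_regions n \<alpha> \<beta> = fan_region \<alpha> \<beta> ` {..<n}"

definition normal_cone :: "complex set \<Rightarrow> complex \<Rightarrow> complex set" where
  "normal_cone P v = {c. \<forall>w\<in>P. inner c w \<le> inner c v}"

definition normal_fan_regions :: "complex set \<Rightarrow> complex set set" where
  "normal_fan_regions P = {normal_cone P v | v. v extreme_point_of P}"

definition inscribable :: "nat \<Rightarrow> real \<Rightarrow> (nat \<Rightarrow> real) \<Rightarrow> bool" where
  "inscribable n \<alpha> \<beta> \<longleftrightarrow>
     (\<exists>P. polytope P \<and> (\<exists>c r. \<forall>v. v extreme_point_of P \<longrightarrow> dist v c = r)
          \<and> normal_fan_regions P = fan_regions n \<alpha> \<beta>)"

definition reflect_line :: "real \<Rightarrow> complex \<Rightarrow> complex" where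
  "reflect_line t z = cis (2 * t) * cnj z"

fun refl_comp :: "real \<Rightarrow> (nat \<Rightarrow> real) \<Rightarrow> nat \<Rightarrow> complex \<Rightarrow> complex" where
  "refl_comp \<alpha> \<beta> 0 z = z"
| "refl_comp \<alpha> \<beta> (Suc k) z = reflect_line (ray_angle \<alpha> \<beta> k) (refl_comp \<alpha> \<beta> k z)"

definition virtually_inscribable :: "nat \<Rightarrow> real \<Rightarrow> (nat \<Rightarrow> real) \<Rightarrow> bool" where
  "virtually_inscribable n \<alpha> \<beta> \<longleftrightarrow> (\<exists>v. v \<noteq> 0 \<and> refl_comp \<alpha> \<beta> n v = v)"

end

theory Submission
  imports Defs
begin

(* Seen from the centre of the circle, put vertex k of an inscribed polygon at angle
   ray_k + delta_k. The polygon has the prescribed normal fan iff delta_k > 0 and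
   delta_k + delta_(k+1) = beta_k for all k (indices mod n), because the outer normal of
   the edge joining vertices k and k+1 bisects their directions.
   For odd n this cyclic system has the unique solution
   2 delta_j = beta_j - beta_(j+1) + ... + beta_(j+n-1).
   For even n it is solvable iff the alternate angles sum to pi, which is exactly virtual
   inscribability; its solutions are then c_k + (-1)^k t for one particular solution c.
   A positive one exists iff c_p + c_q > 0 whenever p and q have opposite parity, and
   c_(j+1) + c_(j+2h+2) is pi minus the sum appearing in the even case. *)

section \<open>Angles and polygons in the plane\<close>

lemma cis_eq_cis_iff: "cis x = cis y \<longleftrightarrow> (\<exists>q::int. x = y + 2 * pi * q)"
  using sin_cos_eq_iff[of x y] by (auto simp: complex_eq_iff)

lemma cis_add_int_multiple_2pi: "cis (x + 2 * pi * of_int q) = cis x"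
  using cis_eq_cis_iff by blast

lemma inner_scaled_cis: "inner (complex_of_real r * cis a) (cis b) = r * cos (a - b)"
  by (simp add: inner_complex_def cos_diff algebra_simps)

lemma inner_cis_scaled: "inner (cis b) (complex_of_real r * cis a) = r * cos (b - a)"
  by (simp add: inner_complex_def cos_diff algebra_simps)

lemma polar_form_above:
  fixes x :: complex
  assumes "x \<noteq> 0"
  obtains s where "x = complex_of_real (norm x) * cis s" "a \<le> s"
proof
  define q where "q = \<lceil>(a - Arg x) / (2 * pi)\<rceil>"
  show "x = complex_of_real (norm x) * cis (Arg x + 2 * pi * q)"
    using rcis_cmod_Arg[of x] by (simp add: rcis_def cis_add_int_multiple_2pi)
  have "(a - Arg x) / (2 * pi) \<le> q"
    unfolding q_def by (rule le_of_int_ceiling)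
  then show "a \<le> Arg x + 2 * pi * q"
    by (simp add: pos_divide_le_eq mult.commute)
qed

lemma refl_comp_even: "refl_comp \<alpha> \<beta> (2 * p) z = cis (2 * (\<Sum>i<p. \<beta> (2 * i))) * z"
proof (induction p)
  case (Suc p)
  have "ray_angle \<alpha> \<beta> (Suc (2 * p)) = ray_angle \<alpha> \<beta> (2 * p) + \<beta> (2 * p)"
    unfolding ray_angle_def by simp
  then have "refl_comp \<alpha> \<beta> (2 * Suc p) z = cis (2 * \<beta> (2 * p)) * refl_comp \<alpha> \<beta> (2 * p) z"
    by (simp add: numeral_eq_Suc reflect_line_def cis_cnj cis_mult algebra_simps)
  with Suc show ?case by (simp add: cis_mult algebra_simps)
qed simp

lemma cos_le_cos_if_abs_le:
  fixes x y :: real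
  assumes "\<bar>x\<bar> \<le> \<bar>y\<bar>" "\<bar>y\<bar> \<le> pi"
  shows "cos y \<le> cos x"
  using cos_monotone_0_pi_le[of "\<bar>x\<bar>" "\<bar>y\<bar>"] assms by simp

lemma abs_eq_if_cos_eq:
  fixes x y :: real
  assumes "cos x = cos y" "\<bar>x\<bar> \<le> pi" "\<bar>y\<bar> \<le> pi"
  shows "\<bar>x\<bar> = \<bar>y\<bar>"
  using cos_inj_pi[of "\<bar>x\<bar>" "\<bar>y\<bar>"] assms by simp

lemma inner_eq_one_imp_eq:
  fixes w x :: "'a::real_inner"
  assumes "norm w = 1" "norm x \<le> 1" "inner w x = 1"
  shows "x = w"
proof -
  have "(norm (x - w))\<^sup>2 = (norm x)\<^sup>2 - 2 * inner w x + (norm w)\<^sup>2"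
    by (simp add: power2_norm_eq_inner inner_diff_left inner_diff_right inner_commute)
  also have "\<dots> \<le> 0"
    using assms power_le_one[of "norm x" 2] by simp
  finally show ?thesis by simp
qed

lemma extreme_point_of_convex_hull_unit_sphere:
  fixes S :: "'a::real_inner set"
  assumes "S \<subseteq> sphere 0 1" "w \<in> S"
  shows "w extreme_point_of convex hull S"
proof (rule extreme_point_of_Int_supporting_hyperplane_le)
  have w: "norm w = 1" using assms by auto
  have hull: "convex hull S \<subseteq> cball 0 1"
    using assms(1) by (intro hull_minimal) auto
  show "inner w x \<le> 1" if "x \<in> convex hull S" for x
    using norm_cauchy_schwarz[of w x] hull that w by auto
  have "inner w w = 1" using w by (simp flip: power2_norm_eq_inner)
  then show "convex hull S \<inter> {x. inner w x = 1} = {w}"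
    using hull inner_eq_one_imp_eq[OF w] hull_inc[OF assms(2)] by auto
qed

lemma normal_cone_convex_hull:
  assumes "v \<in> S"
  shows "normal_cone (convex hull S) v = {c. \<forall>w\<in>S. inner c w \<le> inner c v}"
proof
  show "normal_cone (convex hull S) v \<subseteq> {c. \<forall>w\<in>S. inner c w \<le> inner c v}"
    unfolding normal_cone_def by (auto intro: hull_inc)
  show "{c. \<forall>w\<in>S. inner c w \<le> inner c v} \<subseteq> normal_cone (convex hull S) v"
  proof
    fix c assume "c \<in> {c. \<forall>w\<in>S. inner c w \<le> inner c v}"
    then have "convex hull S \<subseteq> {w. inner c w \<le> inner c v}"
      by (intro hull_minimal) (auto simp: convex_halfspace_le)
    then show "c \<in> normal_cone (convex hull S) v"
      unfolding normal_cone_def by auto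
  qed
qed

lemma polytope_subset_cball:
  fixes P :: "'a::euclidean_space set"
  assumes "polytope P" "\<And>v. v extreme_point_of P \<Longrightarrow> dist v c = r"
  shows "P \<subseteq> cball c r"
proof -
  have "P = convex hull {v. v extreme_point_of P}"
    using assms(1) by (intro Krein_Milman_Minkowski) (simp_all add: polytope_imp_compact polytope_imp_convex)
  also have "\<dots> \<subseteq> cball c r"
    using assms(2) by (intro hull_minimal) (auto simp: dist_commute)
  finally show ?thesis .
qed

lemma sphere_point_in_normal_cone:
  assumes "P \<subseteq> cball c r" "dist v c = r"
  shows "v - c \<in> normal_cone P v"
  unfolding normal_cone_def
proof (intro CollectI ballI)
  fix w assume "w \<in> P"
  then have "norm (w - c) \<le> r"
    using assms(1) by (auto simp: dist_norm norm_minus_commute)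
  have "inner (v - c) (w - c) \<le> norm (v - c) * norm (w - c)"
    by (rule norm_cauchy_schwarz)
  also have "\<dots> \<le> r * r"
    using assms(2) \<open>norm (w - c) \<le> r\<close> by (auto simp: dist_norm intro!: mult_left_mono)
  also have "r * r = inner (v - c) (v - c)"
    using assms(2) by (simp add: dist_norm power2_eq_square flip: power2_norm_eq_inner)
  finally show "inner (v - c) w \<le> inner (v - c) v"
    by (simp add: inner_diff_right)
qed

lemma strict_mono_nearest_iff:
  fixes f g :: "nat \<Rightarrow> real"
  assumes mono: "strict_mono f" and mid: "\<And>l. f l + f (Suc l) = 2 * g (Suc l)" and "g 0 \<le> s"
  shows "(\<forall>k. \<bar>s - f l\<bar> \<le> \<bar>s - f k\<bar>) \<longleftrightarrow> g l \<le> s \<and> s \<le> g (Suc l)"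
proof
  assume near: "\<forall>k. \<bar>s - f l\<bar> \<le> \<bar>s - f k\<bar>"
  have "s \<le> g (Suc l)"
    using near[rule_format, of "Suc l"] mid[of l] strict_monoD[OF mono, of l "Suc l"] by auto
  moreover have "g l \<le> s"
  proof (cases l)
    case 0
    with \<open>g 0 \<le> s\<close> show ?thesis by simp
  next
    case (Suc l')
    then show ?thesis
      using near[rule_format, of l'] mid[of l'] strict_monoD[OF mono, of l' l] by auto
  qed
  ultimately show "g l \<le> s \<and> s \<le> g (Suc l)" by blast
next
  assume between: "g l \<le> s \<and> s \<le> g (Suc l)"
  show "\<forall>k. \<bar>s - f l\<bar> \<le> \<bar>s - f k\<bar>"
  proof
    fix k
    consider "k < l" | "k = l" | "l < k" by linarith
    then show "\<bar>s - f l\<bar> \<le> \<bar>s - f k\<bar>"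
    proof cases
      case 1
      then obtain l' where l': "l = Suc l'" "k \<le> l'" by (cases l) auto
      then have "f k \<le> f l'" "f l' < f l"
        using mono by (auto simp: strict_mono_less_eq strict_mono_less)
      then show ?thesis using between mid[of l'] l'(1) by auto
    next
      case 3
      then have "f (Suc l) \<le> f k" "f l < f (Suc l)"
        using mono by (auto simp: strict_mono_less_eq strict_mono_less)
      then show ?thesis using between mid[of l] by auto
    qed simp
  qed
qed

section \<open>Alternating sums and two-term recurrences\<close>

lemma alternating_sum_telescope:
  fixes x b :: "nat \<Rightarrow> 'a::comm_ring_1"
  assumes "\<And>l. x l + x (Suc l) = b l"
  shows "(\<Sum>k<N. (-1) ^ k * b (j + k)) = x j - (-1) ^ N * x (j + N)"
proof (induction N)
  case (Suc N)
  then show ?case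
    using assms[of "j + N", symmetric] by (simp add: algebra_simps)
qed simp

lemma alternating_sum_shift:
  fixes b :: "nat \<Rightarrow> 'a::comm_ring_1"
  shows "(\<Sum>k<N. (-1) ^ k * b (j + k)) + (\<Sum>k<N. (-1) ^ k * b (Suc j + k))
           = b j - (-1) ^ N * b (j + N)"
  by (induction N) (simp_all add: algebra_simps)

lemma periodic_mod:
  fixes x :: "nat \<Rightarrow> 'a" and N :: nat
  assumes "\<And>l. x (l + N) = x l"
  shows "x (l mod N) = x l"
proof -
  have "x (k + N * q) = x k" for k q
  proof (induction q)
    case (Suc q)
    have "x (k + N * Suc q) = x (k + N * q + N)" by (simp add: algebra_simps)
    with Suc show ?case by (simp add: assms)
  qed simp
  from this[of "l mod N" "l div N"] show ?thesis by simp
qed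

definition zigzag_sum :: "(nat \<Rightarrow> real) \<Rightarrow> nat \<Rightarrow> nat \<Rightarrow> nat \<Rightarrow> real" where
  "zigzag_sum b m h j = (\<Sum>i=1..h. b (2 * i + j)) + (\<Sum>i=h+1..m-1. b (2 * i + 1 + j))"

lemma zigzag_sum_0:
  assumes "0 < m"
  shows "b (Suc j) + zigzag_sum b m 0 j = (\<Sum>i<m. b (2 * i + Suc j))"
proof -
  obtain m' where m: "m = Suc m'" using assms by (cases m) auto
  have "(\<Sum>i<m. b (2 * i + Suc j)) = b (Suc j) + (\<Sum>i<m'. b (2 * Suc i + Suc j))"
    unfolding m sum.lessThan_Suc_shift by simp
  moreover have "zigzag_sum b m 0 j = (\<Sum>i<m'. b (2 * Suc i + Suc j))"
    unfolding zigzag_sum_def m by (simp add: sum.atLeast1_atMost_eq)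
  ultimately show ?thesis by simp
qed

lemma zigzag_sum_Suc:
  assumes "Suc h < m"
  shows "zigzag_sum b m (Suc h) j = zigzag_sum b m h j + b (2 * Suc h + j) - b (2 * Suc h + 1 + j)"
proof -
  have "(\<Sum>i=Suc h..m-1. b (2 * i + 1 + j)) = b (2 * Suc h + 1 + j) + (\<Sum>i=Suc (Suc h)..m-1. b (2 * i + 1 + j))"
    using assms by (intro sum.atLeast_Suc_atMost) simp
  then show ?thesis
    unfolding zigzag_sum_def by simp
qed

lemma zigzag_sum_offsets:
  fixes x b :: "nat \<Rightarrow> real"
  assumes rec: "\<And>l. x l + x (Suc l) = b l" and "h < m"
  shows "zigzag_sum b m h j + x (Suc j) + x (2 * h + 2 + j) = (\<Sum>i<m. b (2 * i + Suc j))"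
  using \<open>h < m\<close>
proof (induction h)
  case 0
  then show ?case
    using zigzag_sum_0[of m b j] rec[of "Suc j"] by simp
next
  case (Suc h)
  have "x (2 * Suc h + 2 + j) = x (2 * h + 2 + j) + b (2 * Suc h + 1 + j) - b (2 * Suc h + j)"
    using rec[of "2 * h + 2 + j"] rec[of "2 * h + 3 + j"] by (simp add: numeral_eq_Suc)
  with Suc show ?case
    using zigzag_sum_Suc[of h m b j] by simp
qed

lemma exists_real_between:
  fixes A B :: "real set"
  assumes "finite A" "A \<noteq> {}" "finite B" "B \<noteq> {}" "\<And>a b. a \<in> A \<Longrightarrow> b \<in> B \<Longrightarrow> a < b"
  shows "\<exists>t. (\<forall>a\<in>A. a < t) \<and> (\<forall>b\<in>B. t < b)"
proof (intro exI conjI ballI)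
  have "Max A < Min B" using assms by simp
  then show "a < (Max A + Min B) / 2" if "a \<in> A" for a
    using Max_ge[OF assms(1) that] by simp
  show "(Max A + Min B) / 2 < b" if "b \<in> B" for b
    using Min_le[OF assms(3) that] \<open>Max A < Min B\<close> by simp
qed

lemma exists_alternating_shift_pos:
  fixes c :: "nat \<Rightarrow> real"
  assumes "1 < N" and pair: "\<And>p q. p < N \<Longrightarrow> q < N \<Longrightarrow> even p \<Longrightarrow> odd q \<Longrightarrow> 0 < c p + c q"
  shows "\<exists>t. \<forall>k<N. 0 < c k + (-1) ^ k * t"
proof -
  define A where "A = (\<lambda>p. - c p) ` {p. p < N \<and> even p}"
  define B where "B = c ` {q. q < N \<and> odd q}"
  have "- c 0 \<in> A" "c 1 \<in> B"
    using \<open>1 < N\<close> by (auto simp: A_def B_def)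
  moreover have "a < b" if "a \<in> A" "b \<in> B" for a b
    using that pair by (force simp: A_def B_def)
  moreover have "finite A" "finite B"
    by (simp_all add: A_def B_def)
  ultimately obtain t where t: "\<forall>a\<in>A. a < t" "\<forall>b\<in>B. t < b"
    using exists_real_between[of A B] by blast
  have "0 < c k + (-1) ^ k * t" if "k < N" for k
  proof (cases "even k")
    case True
    then have "- c k < t" using t(1) that by (auto simp: A_def)
    with True show ?thesis by simp
  next
    case False
    then have "t < c k" using t(2) that by (auto simp: B_def)
    with False show ?thesis by simp
  qed
  then show ?thesis by blast
qed

lemma sum_every_other_shift:
  fixes b :: "nat \<Rightarrow> 'a::cancel_comm_monoid_add"
  assumes "b (2 * m + s) = b s"
  shows "(\<Sum>i<m. b (2 * i + Suc (Suc s))) = (\<Sum>i<m. b (2 * i + s))"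
proof -
  have "b s + (\<Sum>i<m. b (2 * i + Suc (Suc s))) = (\<Sum>i<Suc m. b (2 * i + s))"
    unfolding sum.lessThan_Suc_shift by simp
  also have "\<dots> = b s + (\<Sum>i<m. b (2 * i + s))"
    using assms by (simp add: add.commute)
  finally show ?thesis by simp
qed

primrec alternating_solution :: "(nat \<Rightarrow> real) \<Rightarrow> nat \<Rightarrow> real" where
  "alternating_solution b 0 = 0"
| "alternating_solution b (Suc l) = b l - alternating_solution b l"

lemma alternating_solution_rec: "alternating_solution b l + alternating_solution b (Suc l) = b l"
  by simp

lemma alternating_solution_even:
  "alternating_solution b (2 * p) = (\<Sum>i<p. b (2 * i + 1) - b (2 * i))"
  by (induction p) (simp_all add: numeral_eq_Suc)

lemma alternating_solution_periodic:
  assumes "\<And>l. b (l + N) = b l" "alternating_solution b N = 0"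
  shows "alternating_solution b (l + N) = alternating_solution b l"
  by (induction l) (simp_all add: assms)

section \<open>Fans with lifted indices\<close>

locale complete_pointed_fan =
  fixes n :: nat and \<alpha> :: real and \<beta> :: "nat \<Rightarrow> real"
  assumes three_le_n: "3 \<le> n"
    and region_angle_bounds: "\<And>i. i < n \<Longrightarrow> 0 < \<beta> i \<and> \<beta> i < pi"
    and sum_region_angles: "(\<Sum>i<n. \<beta> i) = 2 * pi"
begin

text \<open>Region indices are lifted from residues mod \<open>n\<close> to all of \<open>nat\<close>: \<open>region_angle\<close> is
  \<open>n\<close>-periodic, while \<open>ray\<close> grows by \<open>2 * pi\<close> per period, so that \<open>ray\<close> is strictly increasing
  and region \<open>l mod n\<close> is swept out by the angles between \<open>ray l\<close> and \<open>ray (Suc l)\<close>.\<close>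
definition region_angle :: "nat \<Rightarrow> real" where
  "region_angle l = \<beta> (l mod n)"

definition ray :: "nat \<Rightarrow> real" where
  "ray l = \<alpha> + (\<Sum>k<l. region_angle k)"

lemma n_pos: "0 < n"
  using three_le_n by simp

lemma region_angle_pos: "0 < region_angle l"
  and region_angle_less_pi: "region_angle l < pi"
  using region_angle_bounds[of "l mod n"] n_pos by (auto simp: region_angle_def)

lemma region_angle_mod [simp]: "region_angle (l mod n) = region_angle l"
  by (simp add: region_angle_def)

lemma region_angle_add_n [simp]: "region_angle (l + n) = region_angle l"
  by (simp add: region_angle_def)

lemma ray_0: "ray 0 = \<alpha>"
  by (simp add: ray_def)

lemma ray_Suc: "ray (Suc l) = ray l + region_angle l"
  by (simp add: ray_def)

lemma ray_eq_ray_angle: "l \<le> n \<Longrightarrow> ray l = ray_angle \<alpha> \<beta> l"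
  unfolding ray_def ray_angle_def region_angle_def by (auto intro!: sum.cong)

lemma ray_add_n: "ray (l + n) = ray l + 2 * pi"
proof (induction l)
  case 0
  show ?case
    using ray_eq_ray_angle[of n] sum_region_angles by (simp add: ray_0 ray_angle_def)
next
  case (Suc l)
  then show ?case
    using ray_Suc[of "l + n"] by (simp add: ray_Suc)
qed

lemma ray_add_mult_n: "ray (l + n * q) = ray l + 2 * pi * q"
proof (induction q)
  case (Suc q)
  have "ray (l + n * Suc q) = ray (l + n * q) + 2 * pi"
    using ray_add_n[of "l + n * q"] by (simp add: algebra_simps)
  with Suc show ?case by (simp add: algebra_simps)
qed simp

lemma ray_mod: "ray l = ray (l mod n) + 2 * pi * (l div n)"
  using ray_add_mult_n[of "l mod n" "l div n"] by simp

lemma strict_mono_ray: "strict_mono ray"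
  by (simp add: strict_mono_Suc_iff ray_Suc region_angle_pos)

lemma cis_ray_mod: "cis (ray (l mod n) + x) = cis (ray l + x)"
  using cis_add_int_multiple_2pi[of "ray (l mod n) + x" "int (l div n)"]
  by (simp add: ray_mod[of l] algebra_simps)

lemma exists_ray_interval:
  assumes "\<alpha> \<le> s"
  obtains l where "ray l \<le> s" "s \<le> ray (Suc l)"
proof -
  obtain q :: nat where "(s - \<alpha>) / (2 * pi) < q"
    using reals_Archimedean2 by blast
  then have "s < ray (n * q)"
    using ray_add_mult_n[of 0 q] by (simp add: ray_0 pos_divide_less_eq algebra_simps)
  then have ex: "\<exists>N. s < ray N" ..
  define N where "N = (LEAST N. s < ray N)"
  have "s < ray N"
    unfolding N_def using LeastI_ex[OF ex] .
  moreover have "N \<noteq> 0"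
    using \<open>s < ray N\<close> assms by (metis not_le ray_0)
  moreover have "ray (N - 1) \<le> s"
    using not_less_Least[of "N - 1" "\<lambda>N. s < ray N"] \<open>N \<noteq> 0\<close> unfolding N_def by force
  ultimately show ?thesis
    using that[of "N - 1"] by simp
qed

lemma in_fan_region_mod:
  assumes "ray l \<le> s" "s \<le> ray (Suc l)" "0 \<le> \<rho>"
  shows "complex_of_real \<rho> * cis s \<in> fan_region \<alpha> \<beta> (l mod n)"
proof -
  define t where "t = s - 2 * pi * (l div n)"
  have "complex_of_real \<rho> * cis s = complex_of_real \<rho> * cis t"
    using cis_add_int_multiple_2pi[of t "int (l div n)"] by (simp add: t_def)
  moreover have "ray_angle \<alpha> \<beta> (l mod n) \<le> t" "t \<le> ray_angle \<alpha> \<beta> (l mod n) + \<beta> (l mod n)"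
    using assms ray_mod[of l] ray_Suc[of l] ray_eq_ray_angle[of "l mod n"] n_pos
    by (simp_all add: t_def region_angle_def less_imp_le)
  ultimately show ?thesis
    unfolding fan_region_def using assms(3) by blast
qed

lemma fan_region_polar:
  assumes "x \<in> fan_region \<alpha> \<beta> i" "i < n"
  obtains d where "x = complex_of_real (norm x) * cis (ray i + d)" "0 \<le> d" "d \<le> region_angle i"
proof -
  obtain r t where "x = complex_of_real r * cis t" "0 \<le> r"
    "ray_angle \<alpha> \<beta> i \<le> t" "t \<le> ray_angle \<alpha> \<beta> i + \<beta> i"
    using assms(1) unfolding fan_region_def by blast
  then show ?thesis
    using that[of "t - ray i"] ray_eq_ray_angle[of i] assms(2)
    by (simp add: norm_mult region_angle_def)
qed

lemma fan_region_lift: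
  assumes x: "complex_of_real \<rho> * cis s \<in> fan_region \<alpha> \<beta> i" and "0 < \<rho>" "i < n" "ray n \<le> s"
  obtains l where "l mod n = i" "ray l \<le> s" "s \<le> ray (Suc l)"
proof -
  obtain d where d: "complex_of_real \<rho> * cis s = complex_of_real \<rho> * cis (ray i + d)"
    "0 \<le> d" "d \<le> region_angle i"
    using fan_region_polar[OF x \<open>i < n\<close>] \<open>0 < \<rho>\<close> by (auto simp: norm_mult)
  then have "cis s = cis (ray i + d)"
    using \<open>0 < \<rho>\<close> by simp
  then obtain q :: int where q: "s = ray i + d + 2 * pi * q"
    using cis_eq_cis_iff by blast
  have "ray i + d \<le> ray n"
    using d ray_Suc[of i] strict_mono_ray[THEN strict_mono_less_eq, of "Suc i" n] \<open>i < n\<close> by simp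
  then have "0 \<le> 2 * pi * q"
    using q \<open>ray n \<le> s\<close> by linarith
  then have "0 \<le> q"
    using pi_gt_zero by (auto simp: zero_le_mult_iff)
  then have "ray (i + n * nat q) = ray i + 2 * pi * q" "ray (Suc (i + n * nat q)) = ray (Suc i) + 2 * pi * q"
    using ray_add_mult_n[of i "nat q"] ray_add_mult_n[of "Suc i" "nat q"] by simp_all
  then show ?thesis
    using that[of "i + n * nat q"] q d \<open>i < n\<close> by (simp add: ray_Suc)
qed

lemma fan_region_inj:
  assumes "i < n" "k < n" "fan_region \<alpha> \<beta> i = fan_region \<alpha> \<beta> k"
  shows "i = k"
proof -
  define s where "s = ray (i + n) + region_angle i / 2"
  have s: "ray (i + n) < s" "s < ray (Suc (i + n))"
    using region_angle_pos[of i] by (simp_all add: s_def ray_Suc)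
  then have "complex_of_real 1 * cis s \<in> fan_region \<alpha> \<beta> k"
    using in_fan_region_mod[of "i + n" s 1] assms by simp
  moreover have "ray n \<le> s"
    using s strict_mono_ray[THEN strict_mono_less_eq, of n "i + n"] by simp
  ultimately obtain l where l: "l mod n = k" "ray l \<le> s" "s \<le> ray (Suc l)"
    using fan_region_lift[of 1 s k] \<open>k < n\<close> by auto
  have "l = i + n"
  proof (rule ccontr)
    assume "l \<noteq> i + n"
    then have "Suc l \<le> i + n \<or> Suc (i + n) \<le> l" by linarith
    then show False
      using s l strict_mono_ray[THEN strict_mono_less_eq] by (meson linorder_not_le order_trans)
  qed
  then show ?thesis
    using l(1) assms(1) by simp
qed

section \<open>Inscribability via vertex offsets\<close>

text \<open>Seen from the centre of the circumcircle, vertex \<open>k\<close> of an inscribed polygon lies at angle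
  \<open>ray k + \<delta> k\<close>. The edge joining vertices \<open>k\<close> and \<open>k + 1\<close> has outer normal along ray \<open>k + 1\<close>,
  which therefore bisects the two vertex directions: \<open>\<delta> k + \<delta> (k + 1) = \<beta> k\<close>.\<close>
definition admissible_offsets :: "(nat \<Rightarrow> real) \<Rightarrow> bool" where
  "admissible_offsets \<delta> \<longleftrightarrow> (\<forall>k<n. 0 < \<delta> k) \<and> (\<forall>k<n. \<delta> k + \<delta> (Suc k mod n) = \<beta> k)"

lemma admissible_offsets_mod:
  assumes "admissible_offsets \<delta>"
  shows "0 < \<delta> (l mod n)" "\<delta> (l mod n) + \<delta> (Suc l mod n) = region_angle l"
proof -
  have "l mod n < n" using n_pos by simp
  with assms show "0 < \<delta> (l mod n)" "\<delta> (l mod n) + \<delta> (Suc l mod n) = region_angle l"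
    unfolding admissible_offsets_def region_angle_def by (auto simp: mod_Suc_eq)
qed

lemma admissible_offsets_periodicI:
  assumes "\<And>l. x l + x (Suc l) = region_angle l" "\<And>l. x (l + n) = x l" "\<And>k. k < n \<Longrightarrow> 0 < x k"
  shows "admissible_offsets x"
  unfolding admissible_offsets_def
  using assms periodic_mod[of x n] by (auto simp: region_angle_def)

definition vertex_angle :: "(nat \<Rightarrow> real) \<Rightarrow> nat \<Rightarrow> real" where
  "vertex_angle \<delta> l = ray l + \<delta> (l mod n)"

context
  fixes \<delta> :: "nat \<Rightarrow> real"
  assumes admissible: "admissible_offsets \<delta>"
begin

lemma vertex_angle_between: "ray l < vertex_angle \<delta> l" "vertex_angle \<delta> l < ray (Suc l)"
  using admissible_offsets_mod[OF admissible, of l] admissible_offsets_mod(1)[OF admissible, of "Suc l"]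
  by (simp_all add: vertex_angle_def ray_Suc)

lemma vertex_angle_midpoint: "vertex_angle \<delta> l + vertex_angle \<delta> (Suc l) = 2 * ray (Suc l)"
  using admissible_offsets_mod(2)[OF admissible, of l] by (simp add: vertex_angle_def ray_Suc)

lemma strict_mono_vertex_angle: "strict_mono (vertex_angle \<delta>)"
  by (simp add: strict_mono_Suc_iff) (meson vertex_angle_between less_trans)

lemma vertex_angle_add_mult_n: "vertex_angle \<delta> (l + n * q) = vertex_angle \<delta> l + 2 * pi * q"
  by (simp add: vertex_angle_def ray_add_mult_n)

lemma cos_vertex_angle_mod: "cos (s - vertex_angle \<delta> (l mod n)) = cos (s - vertex_angle \<delta> l)"
proof -
  have "cis (s - vertex_angle \<delta> l + 2 * pi * of_int (int (l div n))) = cis (s - vertex_angle \<delta> l)"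
    by (rule cis_add_int_multiple_2pi)
  then have "cos (s - vertex_angle \<delta> l + 2 * pi * (l div n)) = cos (s - vertex_angle \<delta> l)"
    by (metis cis.sel(1) of_int_of_nat_eq)
  then show ?thesis
    using vertex_angle_add_mult_n[of "l mod n" "l div n"] by (simp add: algebra_simps)
qed

lemma exists_vertex_angle_near:
  assumes "ray n \<le> s"
  obtains l where "l mod n = k mod n" "\<bar>s - vertex_angle \<delta> l\<bar> \<le> pi"
proof -
  define d where "d = s - vertex_angle \<delta> (k mod n)"
  have "Suc (k mod n) \<le> n"
    using n_pos by (simp add: Suc_leI)
  then have "vertex_angle \<delta> (k mod n) < ray n"
    using vertex_angle_between(2)[of "k mod n"] strict_mono_ray[THEN strict_mono_less_eq, of "Suc (k mod n)" n]
    by simp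
  then have "0 < d" using assms by (simp add: d_def)
  define q where "q = \<lfloor>(d + pi) / (2 * pi)\<rfloor>"
  have "0 \<le> q" using \<open>0 < d\<close> by (simp add: q_def)
  have "of_int q \<le> (d + pi) / (2 * pi)" "(d + pi) / (2 * pi) < of_int q + 1"
    unfolding q_def by linarith+
  then have "\<bar>d - 2 * pi * q\<bar> \<le> pi"
    by (simp add: field_simps abs_le_iff)
  moreover have "vertex_angle \<delta> (k mod n + n * nat q) = vertex_angle \<delta> (k mod n) + 2 * pi * q"
    using vertex_angle_add_mult_n \<open>0 \<le> q\<close> by simp
  ultimately show ?thesis
    using that[of "k mod n + n * nat q"] by (simp add: d_def algebra_simps)
qed

text \<open>Maximising \<open>cos (s - vertex_angle \<delta> k)\<close> over the residues \<open>k\<close> amounts to finding a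
  vertex angle nearest to \<open>s\<close> among all lifts, because each residue has a lift within \<open>pi\<close> of \<open>s\<close>.\<close>
lemma max_cos_iff_nearest:
  assumes "i < n" "ray n \<le> s"
  shows "(\<forall>k<n. cos (s - vertex_angle \<delta> k) \<le> cos (s - vertex_angle \<delta> i))
           \<longleftrightarrow> (\<exists>l. l mod n = i \<and> (\<forall>k. \<bar>s - vertex_angle \<delta> l\<bar> \<le> \<bar>s - vertex_angle \<delta> k\<bar>))"
    (is "?max \<longleftrightarrow> (\<exists>l. l mod n = i \<and> ?nearest l)")
proof
  have "\<alpha> \<le> s"
    using assms(2) strict_mono_ray[THEN strict_mono_less_eq, of 0 n] by (simp add: ray_0)
  assume max: ?max
  obtain j where "ray j \<le> s" "s \<le> ray (Suc j)"
    using exists_ray_interval[OF \<open>\<alpha> \<le> s\<close>] .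
  then have near_j: "?nearest j"
    using strict_mono_nearest_iff[OF strict_mono_vertex_angle vertex_angle_midpoint] \<open>\<alpha> \<le> s\<close>
    by (simp add: ray_0)
  obtain l where l: "l mod n = i" "\<bar>s - vertex_angle \<delta> l\<bar> \<le> pi"
    using exists_vertex_angle_near[OF assms(2), of i] assms(1) by auto
  have "cos (s - vertex_angle \<delta> (j mod n)) \<le> cos (s - vertex_angle \<delta> i)"
    using max n_pos by simp
  then have "cos (s - vertex_angle \<delta> j) \<le> cos (s - vertex_angle \<delta> l)"
    using cos_vertex_angle_mod[of s j] cos_vertex_angle_mod[of s l] l(1) by simp
  moreover have "cos (s - vertex_angle \<delta> l) \<le> cos (s - vertex_angle \<delta> j)"
    using cos_le_cos_if_abs_le[OF near_j[rule_format] l(2)] .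
  ultimately have "cos (s - vertex_angle \<delta> l) = cos (s - vertex_angle \<delta> j)"
    by linarith
  moreover have "\<bar>s - vertex_angle \<delta> j\<bar> \<le> pi"
    using near_j l(2) order_trans by blast
  ultimately have "\<bar>s - vertex_angle \<delta> l\<bar> = \<bar>s - vertex_angle \<delta> j\<bar>"
    using abs_eq_if_cos_eq l(2) by blast
  then show "\<exists>l. l mod n = i \<and> ?nearest l"
    using near_j l(1) by auto
next
  assume "\<exists>l. l mod n = i \<and> ?nearest l"
  then obtain l where l: "l mod n = i" "?nearest l" by blast
  show ?max
  proof (intro allI impI)
    fix k assume "k < n"
    obtain l' where l': "l' mod n = k" "\<bar>s - vertex_angle \<delta> l'\<bar> \<le> pi"
      using exists_vertex_angle_near[OF assms(2), of k] \<open>k < n\<close> by auto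
    have "cos (s - vertex_angle \<delta> l') \<le> cos (s - vertex_angle \<delta> l)"
      using cos_le_cos_if_abs_le[OF l(2)[rule_format] l'(2)] .
    then show "cos (s - vertex_angle \<delta> k) \<le> cos (s - vertex_angle \<delta> i)"
      using cos_vertex_angle_mod[of s l] cos_vertex_angle_mod[of s l'] l(1) l'(1) by simp
  qed
qed

lemma fan_region_eq_maximizers:
  assumes "i < n"
  shows "fan_region \<alpha> \<beta> i
           = {x. \<forall>k<n. inner x (cis (vertex_angle \<delta> k)) \<le> inner x (cis (vertex_angle \<delta> i))}"
proof (intro set_eqI)
  fix x
  show "x \<in> fan_region \<alpha> \<beta> i
          \<longleftrightarrow> x \<in> {x. \<forall>k<n. inner x (cis (vertex_angle \<delta> k)) \<le> inner x (cis (vertex_angle \<delta> i))}"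
  proof (cases "x = 0")
    case True
    have "complex_of_real 0 * cis (ray i) \<in> fan_region \<alpha> \<beta> (i mod n)"
      by (rule in_fan_region_mod) (simp_all add: ray_Suc less_imp_le region_angle_pos)
    then show ?thesis using True assms by simp
  next
    case False
    then obtain s where x: "x = complex_of_real (norm x) * cis s" and "ray n \<le> s"
      using polar_form_above by metis
    have "x \<in> fan_region \<alpha> \<beta> i \<longleftrightarrow> (\<exists>l. l mod n = i \<and> ray l \<le> s \<and> s \<le> ray (Suc l))"
    proof
      assume "x \<in> fan_region \<alpha> \<beta> i"
      then have "complex_of_real (norm x) * cis s \<in> fan_region \<alpha> \<beta> i"
        using x by metis
      moreover have "0 < norm x"
        using False by simp
      ultimately show "\<exists>l. l mod n = i \<and> ray l \<le> s \<and> s \<le> ray (Suc l)"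
        using fan_region_lift[of "norm x" s i] \<open>ray n \<le> s\<close> assms by blast
    next
      assume "\<exists>l. l mod n = i \<and> ray l \<le> s \<and> s \<le> ray (Suc l)"
      then show "x \<in> fan_region \<alpha> \<beta> i"
        using in_fan_region_mod[of _ s "norm x"] x by force
    qed
    also have "\<dots> \<longleftrightarrow> (\<exists>l. l mod n = i \<and> (\<forall>k. \<bar>s - vertex_angle \<delta> l\<bar> \<le> \<bar>s - vertex_angle \<delta> k\<bar>))"
      using strict_mono_nearest_iff[OF strict_mono_vertex_angle vertex_angle_midpoint, of s]
        strict_mono_ray[THEN strict_mono_less_eq, of 0 n] \<open>ray n \<le> s\<close>
      by (simp add: ray_0)
    also have "\<dots> \<longleftrightarrow> (\<forall>k<n. cos (s - vertex_angle \<delta> k) \<le> cos (s - vertex_angle \<delta> i))"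
      using max_cos_iff_nearest[OF assms \<open>ray n \<le> s\<close>] by simp
    also have "\<dots> \<longleftrightarrow> (\<forall>k<n. inner x (cis (vertex_angle \<delta> k)) \<le> inner x (cis (vertex_angle \<delta> i)))"
      using False by (subst (1 2) x) (simp add: inner_scaled_cis)
    finally show ?thesis by simp
  qed
qed

lemma inscribable_if_admissible_offsets: "inscribable n \<alpha> \<beta>"
proof -
  define vertex where "vertex k = cis (vertex_angle \<delta> k)" for k
  define P where "P = convex hull (vertex ` {..<n})"
  have "vertex ` {..<n} \<subseteq> sphere 0 1"
    by (auto simp: vertex_def)
  then have extreme: "{v. v extreme_point_of P} = vertex ` {..<n}"
    using extreme_point_of_convex_hull extreme_point_of_convex_hull_unit_sphere
    unfolding P_def by blast
  have "normal_cone P (vertex i) = fan_region \<alpha> \<beta> i" if "i < n" for i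
    using normal_cone_convex_hull[of "vertex i" "vertex ` {..<n}"] fan_region_eq_maximizers[OF that] that
    unfolding P_def vertex_def by auto
  then have "normal_fan_regions P = fan_regions n \<alpha> \<beta>"
  proof -
    assume cones: "\<And>i. i < n \<Longrightarrow> normal_cone P (vertex i) = fan_region \<alpha> \<beta> i"
    have "normal_fan_regions P = normal_cone P ` {v. v extreme_point_of P}"
      unfolding normal_fan_regions_def by blast
    also have "\<dots> = (\<lambda>i. normal_cone P (vertex i)) ` {..<n}"
      unfolding extreme by (simp add: image_image)
    also have "\<dots> = fan_regions n \<alpha> \<beta>"
      unfolding fan_regions_def using cones by (intro image_cong) auto
    finally show ?thesis .
  qed
  moreover have "polytope P"
    unfolding P_def polytope_def by blast
  moreover have "\<forall>v. v extreme_point_of P \<longrightarrow> dist v 0 = 1"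
  proof (intro allI impI)
    fix v assume "v extreme_point_of P"
    then have "v \<in> vertex ` {..<n}" using extreme by blast
    then show "dist v 0 = 1" by (auto simp: vertex_def)
  qed
  ultimately show ?thesis
    unfolding inscribable_def by blast
qed

end

lemma inscribed_polygon_vertices:
  assumes "inscribable n \<alpha> \<beta>"
  obtains P c r v where "P \<subseteq> cball c r"
    and "\<And>i. i < n \<Longrightarrow> v i \<in> P \<and> dist (v i) c = r \<and> normal_cone P (v i) = fan_region \<alpha> \<beta> i"
proof -
  obtain P c r where "polytope P" and on_circle: "\<And>v. v extreme_point_of P \<Longrightarrow> dist v c = r"
    and fan: "normal_fan_regions P = fan_regions n \<alpha> \<beta>"
    using assms unfolding inscribable_def by blast
  have "\<exists>v. v extreme_point_of P \<and> normal_cone P v = fan_region \<alpha> \<beta> i" if "i < n" for i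
  proof -
    have "fan_region \<alpha> \<beta> i \<in> normal_fan_regions P"
      using fan that by (simp add: fan_regions_def)
    then show ?thesis
      unfolding normal_fan_regions_def by auto
  qed
  then obtain v where v: "\<And>i. i < n \<Longrightarrow> v i extreme_point_of P \<and> normal_cone P (v i) = fan_region \<alpha> \<beta> i"
    by metis
  show ?thesis
  proof (rule that[OF polytope_subset_cball[OF \<open>polytope P\<close> on_circle]])
    show "v i \<in> P \<and> dist (v i) c = r \<and> normal_cone P (v i) = fan_region \<alpha> \<beta> i" if "i < n" for i
      using v[OF that] on_circle extreme_point_of_def by blast
  qed
qed

text \<open>\<open>u i\<close> is vertex \<open>i\<close> of the inscribed polygon, translated so that the circumcentre is the origin.\<close>
lemma inscribed_polygon_offsets:
  assumes "inscribable n \<alpha> \<beta>"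
  obtains r u \<delta> where "0 < r"
    and "\<And>i. i < n \<Longrightarrow> u i = complex_of_real r * cis (ray i + \<delta> i) \<and> 0 \<le> \<delta> i \<and> \<delta> i \<le> region_angle i"
    and "\<And>i k x. i < n \<Longrightarrow> k < n \<Longrightarrow> x \<in> fan_region \<alpha> \<beta> i \<Longrightarrow> inner x (u k) \<le> inner x (u i)"
    and "\<And>i k. i < n \<Longrightarrow> k < n \<Longrightarrow> u i = u k \<Longrightarrow> i = k"
proof -
  obtain P c r v where P_ball: "P \<subseteq> cball c r"
    and v: "\<And>i. i < n \<Longrightarrow> v i \<in> P \<and> dist (v i) c = r \<and> normal_cone P (v i) = fan_region \<alpha> \<beta> i"
    using inscribed_polygon_vertices[OF assms] by blast
  have v_inj: "i = k" if "i < n" "k < n" "v i = v k" for i k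
    using fan_region_inj v that by metis
  have "0 < r"
  proof (rule ccontr)
    assume "\<not> 0 < r"
    then have "v 0 = c" "v 1 = c"
      using v[of 0] v[of 1] three_le_n zero_le_dist[of "v 0" c] by auto
    then show False
      using v_inj[of 0 1] three_le_n by simp
  qed
  define u where "u i = v i - c" for i
  have "\<exists>d. u i = complex_of_real r * cis (ray i + d) \<and> 0 \<le> d \<and> d \<le> region_angle i" if "i < n" for i
  proof -
    have "u i \<in> fan_region \<alpha> \<beta> i" "norm (u i) = r"
      using sphere_point_in_normal_cone[OF P_ball, of "v i"] v[OF that] by (auto simp: u_def dist_norm)
    then show ?thesis
      using fan_region_polar[of "u i" i] that by metis
  qed
  then obtain \<delta> where polar: "\<And>i. i < n \<Longrightarrow> u i = complex_of_real r * cis (ray i + \<delta> i) \<and> 0 \<le> \<delta> i \<and> \<delta> i \<le> region_angle i"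
    by metis
  have support: "inner x (u k) \<le> inner x (u i)" if "i < n" "k < n" "x \<in> fan_region \<alpha> \<beta> i" for i k x
    using v[of i] v[of k] that unfolding normal_cone_def u_def by (auto simp: inner_diff_right)
  have u_inj: "i = k" if "i < n" "k < n" "u i = u k" for i k
    using v_inj that by (simp add: u_def)
  from \<open>0 < r\<close> polar support u_inj show ?thesis
    by (rule that)
qed

context
  fixes r :: real and u :: "nat \<Rightarrow> complex" and \<delta> :: "nat \<Rightarrow> real"
  assumes r_pos: "0 < r"
    and vertex_polar: "\<And>i. i < n \<Longrightarrow> u i = complex_of_real r * cis (ray i + \<delta> i) \<and> 0 \<le> \<delta> i \<and> \<delta> i \<le> region_angle i"
    and support: "\<And>i k x. i < n \<Longrightarrow> k < n \<Longrightarrow> x \<in> fan_region \<alpha> \<beta> i \<Longrightarrow> inner x (u k) \<le> inner x (u i)"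
begin

lemma vertex_polar_mod:
  "u (l mod n) = complex_of_real r * cis (ray l + \<delta> (l mod n))" "0 \<le> \<delta> (l mod n)" "\<delta> (l mod n) \<le> region_angle l"
  using vertex_polar[of "l mod n"] n_pos by (simp_all add: cis_ray_mod)

text \<open>The direction of ray \<open>l + 1\<close> lies in both adjacent regions, so it is equally far from vertices \<open>l\<close> and \<open>l + 1\<close>.\<close>
lemma offsets_bisect: "\<delta> (l mod n) + \<delta> (Suc l mod n) = region_angle l"
proof -
  define d where "d = cis (ray (Suc l))"
  have "d \<in> fan_region \<alpha> \<beta> (l mod n)" "d \<in> fan_region \<alpha> \<beta> (Suc l mod n)"
    using in_fan_region_mod[of l "ray (Suc l)" 1] in_fan_region_mod[of "Suc l" "ray (Suc l)" 1]
      strict_mono_ray[THEN strict_mono_less_eq] by (simp_all add: d_def)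
  then have "inner d (u (l mod n)) = inner d (u (Suc l mod n))"
    using support n_pos by (meson mod_less_divisor order_antisym)
  then have "r * cos (region_angle l - \<delta> (l mod n)) = r * cos (\<delta> (Suc l mod n))"
    by (simp add: vertex_polar_mod(1) d_def inner_cis_scaled ray_Suc)
  then have cos_eq: "cos (region_angle l - \<delta> (l mod n)) = cos (\<delta> (Suc l mod n))"
    using r_pos by simp
  have "0 \<le> region_angle l - \<delta> (l mod n)" "region_angle l - \<delta> (l mod n) \<le> pi"
    "0 \<le> \<delta> (Suc l mod n)" "\<delta> (Suc l mod n) \<le> pi"
    using vertex_polar_mod(2,3)[of l] vertex_polar_mod(2,3)[of "Suc l"]
      region_angle_less_pi[of l] region_angle_less_pi[of "Suc l"]
    by linarith+
  then have "region_angle l - \<delta> (l mod n) = \<delta> (Suc l mod n)"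
    using cos_eq by (rule cos_inj_pi)
  then show ?thesis
    by simp
qed

lemma admissible_offsets_if_distinct_vertices:
  assumes inj: "\<And>i k. i < n \<Longrightarrow> k < n \<Longrightarrow> u i = u k \<Longrightarrow> i = k"
  shows "admissible_offsets \<delta>"
proof -
  have pos: "0 < \<delta> (Suc l mod n)" for l
  proof (rule ccontr)
    assume "\<not> 0 < \<delta> (Suc l mod n)"
    then have "\<delta> (Suc l mod n) = 0" "\<delta> (l mod n) = region_angle l"
      using vertex_polar_mod(2)[of "Suc l"] offsets_bisect[of l] by simp_all
    then have "u (l mod n) = u (Suc l mod n)"
      by (simp add: vertex_polar_mod(1) ray_Suc)
    then have "l mod n = Suc l mod n"
      using inj n_pos by simp
    then show False
      using three_le_n by (simp add: mod_Suc split: if_splits)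
  qed
  show ?thesis
    unfolding admissible_offsets_def
  proof (intro conjI allI impI)
    fix k assume "k < n"
    show "0 < \<delta> k"
      using pos[of "k + n - 1"] \<open>k < n\<close> n_pos by simp
    show "\<delta> k + \<delta> (Suc k mod n) = \<beta> k"
      using offsets_bisect[of k] \<open>k < n\<close> by (simp add: region_angle_def)
  qed
qed

end

lemma inscribable_iff_admissible_offsets: "inscribable n \<alpha> \<beta> \<longleftrightarrow> (\<exists>\<delta>. admissible_offsets \<delta>)"
proof
  assume "inscribable n \<alpha> \<beta>"
  then obtain r u \<delta> where "0 < r"
    and "\<And>i. i < n \<Longrightarrow> u i = complex_of_real r * cis (ray i + \<delta> i) \<and> 0 \<le> \<delta> i \<and> \<delta> i \<le> region_angle i"
    and "\<And>i k x. i < n \<Longrightarrow> k < n \<Longrightarrow> x \<in> fan_region \<alpha> \<beta> i \<Longrightarrow> inner x (u k) \<le> inner x (u i)"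
    and "\<And>i k. i < n \<Longrightarrow> k < n \<Longrightarrow> u i = u k \<Longrightarrow> i = k"
    using inscribed_polygon_offsets by blast
  then show "\<exists>\<delta>. admissible_offsets \<delta>"
    using admissible_offsets_if_distinct_vertices by blast
next
  assume "\<exists>\<delta>. admissible_offsets \<delta>"
  then show "inscribable n \<alpha> \<beta>"
    using inscribable_if_admissible_offsets by blast
qed

section \<open>Solving the offset recurrence\<close>

lemma admissible_offsets_odd_iff:
  assumes "odd n"
  shows "(\<exists>\<delta>. admissible_offsets \<delta>) \<longleftrightarrow> (\<forall>j<n. 0 < (\<Sum>k<n. (-1) ^ k * region_angle (j + k)))"
proof
  assume "\<exists>\<delta>. admissible_offsets \<delta>"
  then obtain \<delta> where \<delta>: "admissible_offsets \<delta>" ..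
  show "\<forall>j<n. 0 < (\<Sum>k<n. (-1) ^ k * region_angle (j + k))"
  proof (intro allI impI)
    fix j assume "j < n"
    have "(\<Sum>k<n. (-1) ^ k * region_angle (j + k)) = \<delta> (j mod n) - (-1) ^ n * \<delta> ((j + n) mod n)"
      using alternating_sum_telescope[where x = "\<lambda>l. \<delta> (l mod n)", OF admissible_offsets_mod(2)[OF \<delta>]] .
    also have "\<dots> = 2 * \<delta> j"
      using \<open>j < n\<close> assms by simp
    finally show "0 < (\<Sum>k<n. (-1) ^ k * region_angle (j + k))"
      using admissible_offsets_mod(1)[OF \<delta>, of j] \<open>j < n\<close> by simp
  qed
next
  assume pos: "\<forall>j<n. 0 < (\<Sum>k<n. (-1) ^ k * region_angle (j + k))"
  define x where "x j = (\<Sum>k<n. (-1) ^ k * region_angle (j + k)) / 2" for j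
  show "\<exists>\<delta>. admissible_offsets \<delta>"
  proof (intro exI admissible_offsets_periodicI)
    fix l
    have "2 * (x l + x (Suc l)) = region_angle l - (-1) ^ n * region_angle (l + n)"
      unfolding x_def using alternating_sum_shift[where N = n and b = region_angle and j = l] by simp
    then show "x l + x (Suc l) = region_angle l"
      using assms by simp
    have "region_angle (l + n + k) = region_angle (l + k)" for k
      using region_angle_add_n[of "l + k"] by (simp add: add_ac)
    then show "x (l + n) = x l"
      by (simp add: x_def)
  next
    show "0 < x k" if "k < n" for k
      using pos that by (simp add: x_def)
  qed
qed

lemma even_indexed_angle_sum:
  assumes "n = 2 * m" "virtually_inscribable n \<alpha> \<beta>"
  shows "(\<Sum>i<m. \<beta> (2 * i)) = pi"
proof -
  define E where "E = (\<Sum>i<m. \<beta> (2 * i))"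
  define F where "F = (\<Sum>i<m. \<beta> (2 * i + 1))"
  have "0 < m"
    using assms(1) three_le_n by simp
  have "0 < E" "0 < F"
    unfolding E_def F_def using \<open>0 < m\<close> assms(1) region_angle_bounds by (auto intro!: sum_pos)
  have "E + F = 2 * pi"
    using sum_split_even_odd[where f = \<beta> and g = \<beta> and n = m] sum_region_angles assms(1) by (simp add: E_def F_def)
  obtain v where "v \<noteq> 0" "refl_comp \<alpha> \<beta> n v = v"
    using assms(2) unfolding virtually_inscribable_def by blast
  have "refl_comp \<alpha> \<beta> n v = cis (2 * E) * v"
    unfolding E_def assms(1) by (rule refl_comp_even)
  then have "cis (2 * E) * v = 1 * v"
    using \<open>refl_comp \<alpha> \<beta> n v = v\<close> by simp
  then have "cis (2 * E) = cis 0"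
    using \<open>v \<noteq> 0\<close> mult_right_cancel by fastforce
  then obtain q :: int where "2 * E = 0 + 2 * pi * q"
    unfolding cis_eq_cis_iff by blast
  then have "E = pi * q"
    by simp
  with \<open>0 < E\<close> \<open>0 < F\<close> \<open>E + F = 2 * pi\<close> have "0 < pi * q" "pi * q < pi * 2"
    by linarith+
  then have "0 < q" "q < 2"
    by (simp_all add: zero_less_mult_iff)
  then show ?thesis
    using \<open>E = pi * q\<close> by (simp add: E_def)
qed

context
  fixes m :: nat
  assumes n_eq: "n = 2 * m" and even_sum: "(\<Sum>i<m. \<beta> (2 * i)) = pi"
begin

lemma alternate_angle_sum: "(\<Sum>i<m. region_angle (2 * i + s)) = pi"
proof (induction s rule: less_induct)
  case (less s)
  have even_terms: "(\<Sum>i<m. region_angle (2 * i + k)) = (\<Sum>i<m. \<beta> (2 * i + k))" if "k < 2" for k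
  proof (intro sum.cong)
    fix i assume "i \<in> {..<m}"
    then have "2 * i + k < n"
      using \<open>k < 2\<close> n_eq by simp
    then show "region_angle (2 * i + k) = \<beta> (2 * i + k)"
      by (simp add: region_angle_def)
  qed simp
  consider "s = 0" | "s = 1" | s' where "s = Suc (Suc s')" by (cases s; cases "s - 1") auto
  then show ?case
  proof cases
    case 1
    then show ?thesis using even_terms[of 0] even_sum by simp
  next
    case 2
    then show ?thesis
      using even_terms[of 1] even_sum sum_split_even_odd[where f = \<beta> and g = \<beta> and n = m] sum_region_angles[unfolded n_eq] by simp
  next
    case 3
    have "region_angle (2 * m + s') = region_angle s'"
      unfolding n_eq[symmetric] using region_angle_add_n[of s'] by (simp only: add.commute)
    then show ?thesis
      using less.IH[of s'] sum_every_other_shift[of region_angle m s'] 3 by simp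
  qed
qed

lemma zigzag_sum_mod: "zigzag_sum region_angle m h (j mod n) = zigzag_sum region_angle m h j"
proof -
  have "region_angle (a + j mod n) = region_angle (a + j)" for a
    by (simp add: region_angle_def mod_add_right_eq)
  then show ?thesis
    unfolding zigzag_sum_def by presburger
qed

lemma zigzag_sum_less_pi_if_admissible:
  assumes "admissible_offsets \<delta>" "h < m"
  shows "zigzag_sum region_angle m h j < pi"
proof -
  have "zigzag_sum region_angle m h j + \<delta> (Suc j mod n) + \<delta> ((2 * h + 2 + j) mod n) = pi"
    using zigzag_sum_offsets[where x = "\<lambda>l. \<delta> (l mod n)", OF admissible_offsets_mod(2)[OF assms(1)] assms(2)]
      alternate_angle_sum[of "Suc j"] by simp
  then show ?thesis
    using admissible_offsets_mod(1)[OF assms(1), of "Suc j"] admissible_offsets_mod(1)[OF assms(1), of "2 * h + 2 + j"]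
    by linarith
qed

lemma alternating_solution_add_n:
  "alternating_solution region_angle (l + n) = alternating_solution region_angle l"
proof (rule alternating_solution_periodic)
  show "alternating_solution region_angle n = 0"
    using alternate_angle_sum[of 1] alternate_angle_sum[of 0]
    by (simp add: n_eq alternating_solution_even sum_subtractf)
qed simp

lemma alternating_solution_pair_pos:
  assumes zigzag: "\<forall>h<m. \<forall>j<n. zigzag_sum region_angle m h j < pi"
    and "p < q" "q < n" "odd (q - p)"
  shows "0 < alternating_solution region_angle p + alternating_solution region_angle q"
proof -
  define c where "c = alternating_solution region_angle"
  define h where "h = (q - p) div 2"
  define j where "j = p + n - 1"
  have "q - p = 2 * h + 1" "h < m"
    using assms n_eq unfolding h_def by presburger+
  then have idx: "Suc j = p + n" "2 * h + 2 + j = q + n"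
    using assms n_pos unfolding j_def by simp_all
  have "zigzag_sum region_angle m h j + c (Suc j) + c (2 * h + 2 + j) = (\<Sum>i<m. region_angle (2 * i + Suc j))"
    unfolding c_def
    by (rule zigzag_sum_offsets[where x = "alternating_solution region_angle", OF alternating_solution_rec \<open>h < m\<close>])
  then have "zigzag_sum region_angle m h j + c (p + n) + c (q + n) = pi"
    unfolding idx alternate_angle_sum .
  moreover have "zigzag_sum region_angle m h j < pi"
    using zigzag[rule_format, OF \<open>h < m\<close>, of "j mod n"] n_pos zigzag_sum_mod[of h j] by simp
  moreover have "c (p + n) = c p" "c (q + n) = c q"
    unfolding c_def by (rule alternating_solution_add_n)+
  ultimately show ?thesis
    unfolding c_def by linarith
qed

text \<open>The solutions of \<open>x l + x (Suc l) = region_angle l\<close> are \<open>alternating_solution region_angle l + (-1) ^ l * t\<close>;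
  a positive one exists iff the even-indexed values can be separated from the odd-indexed ones.\<close>
lemma admissible_if_zigzag_sum_less_pi:
  assumes zigzag: "\<forall>h<m. \<forall>j<n. zigzag_sum region_angle m h j < pi"
  shows "\<exists>\<delta>. admissible_offsets \<delta>"
proof -
  define c where "c = alternating_solution region_angle"
  have "0 < c p + c q" if "p < n" "q < n" "even p" "odd q" for p q
  proof (cases "p < q")
    case True
    then show ?thesis using alternating_solution_pair_pos[OF zigzag True] that by (simp add: c_def)
  next
    case False
    then have "q < p" using that by (metis linorder_neqE_nat)
    then show ?thesis
      using alternating_solution_pair_pos[OF zigzag \<open>q < p\<close>] that by (simp add: c_def add.commute)
  qed
  then obtain t where t: "\<forall>k<n. 0 < c k + (-1) ^ k * t"
    using exists_alternating_shift_pos[of n c] three_le_n by auto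
  show ?thesis
  proof (intro exI admissible_offsets_periodicI)
    fix l
    show "c l + (-1) ^ l * t + (c (Suc l) + (-1) ^ Suc l * t) = region_angle l"
      by (simp add: c_def)
    show "c (l + n) + (-1) ^ (l + n) * t = c l + (-1) ^ l * t"
      using alternating_solution_add_n[of l] n_eq by (simp add: c_def power_add)
  next
    show "0 < c k + (-1) ^ k * t" if "k < n" for k
      using t that by blast
  qed
qed

lemma admissible_offsets_even_iff:
  "(\<exists>\<delta>. admissible_offsets \<delta>) \<longleftrightarrow> (\<forall>h<m. \<forall>j<n. zigzag_sum region_angle m h j < pi)"
  using zigzag_sum_less_pi_if_admissible admissible_if_zigzag_sum_less_pi by blast

end

end

theorem theorem3p5:
  fixes n :: nat and \<alpha> :: real and \<beta> :: "nat \<Rightarrow> real"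
  assumes "n \<ge> 3"
    and "\<forall>i<n. 0 < \<beta> i \<and> \<beta> i < pi"
    and "(\<Sum>i<n. \<beta> i) = 2 * pi"
    and "virtually_inscribable n \<alpha> \<beta>"
  shows "(odd n \<longrightarrow>
            (inscribable n \<alpha> \<beta> \<longleftrightarrow>
               (\<forall>j<n. (\<Sum>k<n. (-1) ^ k * \<beta> ((j + k) mod n)) > 0)))
       \<and> (\<forall>m. n = 2 * m \<longrightarrow>
            (inscribable n \<alpha> \<beta> \<longleftrightarrow>
               (\<forall>h<m. \<forall>j<n. (\<Sum>i=1..h. \<beta> ((2 * i + j) mod n))
                             + (\<Sum>i=h+1..m-1. \<beta> ((2 * i + 1 + j) mod n)) < pi)))"
proof -
  interpret complete_pointed_fan n \<alpha> \<beta>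
    using assms(1-3) by unfold_locales auto
  show ?thesis
  proof (intro conjI impI allI)
    assume "odd n"
    then show "inscribable n \<alpha> \<beta> \<longleftrightarrow> (\<forall>j<n. (\<Sum>k<n. (-1) ^ k * \<beta> ((j + k) mod n)) > 0)"
      using inscribable_iff_admissible_offsets admissible_offsets_odd_iff by (simp add: region_angle_def)
  next
    fix m assume "n = 2 * m"
    show "inscribable n \<alpha> \<beta> \<longleftrightarrow> (\<forall>h<m. \<forall>j<n. (\<Sum>i=1..h. \<beta> ((2 * i + j) mod n))
                             + (\<Sum>i=h+1..m-1. \<beta> ((2 * i + 1 + j) mod n)) < pi)"
      using inscribable_iff_admissible_offsets
        admissible_offsets_even_iff[OF \<open>n = 2 * m\<close> even_indexed_angle_sum[OF \<open>n = 2 * m\<close> assms(4)]]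
      by (simp add: zigzag_sum_def region_angle_def)
  qed
qed

end
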